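(* Let $S=\{R_0,\dots,R_d\}$ be a scheme on $X$, $\mathbb F$ a field, $x\in X$, $E_a^*=E_a^*(x)$, and let $\mathcal T_0$ be the $\mathbb F$-linear span of $\{E_i^*A_jE_\ell^*:R_i,R_j,R_\ell\in S\}$. If $\mathcal T_0$ is a unital $\mathbb F$-subalgebra of $M_X(\mathbb F)$, then $S$ has no bad pairs.
   Context: Let $X$ be a nonempty finite set. A scheme of class $d$ on $X$ is a partition $S=\{R_0,\dots,R_d\}$ of $X\times X$ into nonempty sets such that $R_0=\{(b,b):b\in X\}$; for each $c$ there is $c'$ with $R_{c'}=\{(f,e):(e,f)\in R_c\}$; and for all $i,j,k$ the intersection number $p_{ij}^k=|\{\ell\in X:(m,\ell)\in R_i,(\ell,n)\in R_j\}|$ does not depend on $(m,n)\in R_k$. The valency is $k_a=p_{aa'}^0$; complex product $R_aR_b=\{R_c:p_{ab}^c>0\}$. For $y\in X$, $yR_a=\{z:(y,z)\in R_a\}$. $A_a\in M_X(\mathbb F)$ is the $(0,1)$ adjacency matrix of $R_a$ and $E_a^*(y)$ is the diagonal $(0,1)$-matrix with ones exactly at positions indexed by $yR_a$. Bad pair: $(u,v)$ is a bad pair of $S$ if there exist an integer $a\ge1$ and $R_{i_b},R_{j_b},R_{\ell_b}\in S$ ($b=0,\dots,a$) with $i_0=u$, $\ell_a=v$, $k_{i_b}=k_{\ell_b}=2$ and $p_{i_bj_b}^{\ell_b}=1$ for all $b$, $\ell_c=i_{c+1}$ for $0\le c\le a-1$, and $|R_{u'}R_v|=1$. *)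

theory Defs
  imports Main
begin

text \<open>The ground set X is the (finite, nonempty) universe of the type 'x.
  A scheme of class d is given by the relations R 0, ..., R d.\<close>

definition is_scheme :: "nat \<Rightarrow> (nat \<Rightarrow> ('x::finite \<times> 'x) set) \<Rightarrow> bool" where
  "is_scheme d R \<longleftrightarrow>
     (\<forall>i\<le>d. R i \<noteq> {}) \<and>
     (\<forall>i\<le>d. \<forall>j\<le>d. i \<noteq> j \<longrightarrow> R i \<inter> R j = {}) \<and>
     (\<Union>i\<in>{..d}. R i) = UNIV \<and>
     R 0 = {(b, b) | b. True} \<and>
     (\<forall>c\<le>d. \<exists>c'\<le>d. R c' = {(f, e). (e, f) \<in> R c}) \<and>
     (\<forall>i\<le>d. \<forall>j\<le>d. \<forall>k\<le>d. \<exists>N. \<forall>(m, n)\<in>R k.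
         card {l. (m, l) \<in> R i \<and> (l, n) \<in> R j} = N)"

text \<open>Intersection number p_{ij}^k, evaluated at some (m,n) in R k
  (independent of the choice for a scheme).\<close>
definition inum :: "(nat \<Rightarrow> ('x::finite \<times> 'x) set) \<Rightarrow> nat \<Rightarrow> nat \<Rightarrow> nat \<Rightarrow> nat" where
  "inum R i j k = (let (m, n) = (SOME mn. mn \<in> R k) in
      card {l. (m, l) \<in> R i \<and> (l, n) \<in> R j})"

definition cidx :: "nat \<Rightarrow> (nat \<Rightarrow> ('x \<times> 'x) set) \<Rightarrow> nat \<Rightarrow> nat" where
  "cidx d R c = (THE c'. c' \<le> d \<and> R c' = {(f, e). (e, f) \<in> R c})"

definition valency :: "nat \<Rightarrow> (nat \<Rightarrow> ('x::finite \<times> 'x) set) \<Rightarrow> nat \<Rightarrow> nat" where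
  "valency d R a = inum R a (cidx d R a) 0"

definition cprod :: "nat \<Rightarrow> (nat \<Rightarrow> ('x::finite \<times> 'x) set) \<Rightarrow> nat \<Rightarrow> nat \<Rightarrow> ('x \<times> 'x) set set" where
  "cprod d R a b = {R c | c. c \<le> d \<and> inum R a b c > 0}"

definition bad_pair :: "nat \<Rightarrow> (nat \<Rightarrow> ('x::finite \<times> 'x) set) \<Rightarrow> nat \<Rightarrow> nat \<Rightarrow> bool" where
  "bad_pair d R u v \<longleftrightarrow>
     (\<exists>(a::nat) (ii::nat \<Rightarrow> nat) (jj::nat \<Rightarrow> nat) (ll::nat \<Rightarrow> nat).
        a \<ge> 1 \<and>
        (\<forall>b\<le>a. ii b \<le> d \<and> jj b \<le> d \<and> ll b \<le> d) \<and>
        ii 0 = u \<and> ll a = v \<and>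
        (\<forall>b\<le>a. valency d R (ii b) = 2 \<and> valency d R (ll b) = 2 \<and>
                inum R (ii b) (jj b) (ll b) = 1) \<and>
        (\<forall>c<a. ll c = ii (Suc c)) \<and>
        card (cprod d R (cidx d R u) v) = 1)"

type_synonym ('x, 'a) xmat = "'x \<Rightarrow> 'x \<Rightarrow> 'a"

definition mmult :: "('x::finite, 'a::field) xmat \<Rightarrow> ('x, 'a) xmat \<Rightarrow> ('x, 'a) xmat" where
  "mmult M N = (\<lambda>y z. \<Sum>w\<in>UNIV. M y w * N w z)"

definition mone :: "('x, 'a::field) xmat" where
  "mone = (\<lambda>y z. if y = z then 1 else 0)"

definition madd :: "('x, 'a::field) xmat \<Rightarrow> ('x, 'a) xmat \<Rightarrow> ('x, 'a) xmat" where
  "madd M N = (\<lambda>y z. M y z + N y z)"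

definition msmult :: "'a::field \<Rightarrow> ('x, 'a) xmat \<Rightarrow> ('x, 'a) xmat" where
  "msmult c M = (\<lambda>y z. c * M y z)"

definition adjm :: "(nat \<Rightarrow> ('x \<times> 'x) set) \<Rightarrow> nat \<Rightarrow> ('x, 'a::field) xmat" where
  "adjm R a = (\<lambda>y z. if (y, z) \<in> R a then 1 else 0)"

definition dualidem :: "(nat \<Rightarrow> ('x \<times> 'x) set) \<Rightarrow> 'x \<Rightarrow> nat \<Rightarrow> ('x, 'a::field) xmat" where
  "dualidem R x a = (\<lambda>y z. if y = z \<and> (x, y) \<in> R a then 1 else 0)"

definition T0 :: "nat \<Rightarrow> (nat \<Rightarrow> ('x::finite \<times> 'x) set) \<Rightarrow> 'x \<Rightarrow> ('x, 'a::field) xmat set" where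
  "T0 d R x = {M. \<exists>c :: nat \<Rightarrow> nat \<Rightarrow> nat \<Rightarrow> 'a.
      M = (\<lambda>y z. \<Sum>i\<le>d. \<Sum>j\<le>d. \<Sum>l\<le>d.
             c i j l * mmult (mmult (dualidem R x i) (adjm R j)) (dualidem R x l) y z)}"

definition unital_subalgebra :: "('x::finite, 'a::field) xmat set \<Rightarrow> bool" where
  "unital_subalgebra T \<longleftrightarrow>
     mone \<in> T \<and>
     (\<forall>M\<in>T. \<forall>N\<in>T. madd M N \<in> T) \<and>
     (\<forall>c. \<forall>M\<in>T. msmult c M \<in> T) \<and>
     (\<forall>M\<in>T. \<forall>N\<in>T. mmult M N \<in> T)"

end

theory Submission
  imports Defs
begin

text \<open>Multiply the matrices \<open>E\<^sup>*\<^sub>i A\<^sub>j E\<^sup>*\<^sub>l\<close> along the chain of a bad pair \<open>(u, v)\<close>.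
  Since every \<open>p\<^sub>i\<^sub>j\<^sup>l\<close> along the chain is 1, each column of the product indexed by
  \<open>z \<in> xR\<^sub>v\<close> is a unit vector supported at a single \<open>y\<^sub>0 \<in> xR\<^sub>u\<close>. As \<open>k\<^sub>u = 2\<close> there is a
  second \<open>y\<^sub>1 \<in> xR\<^sub>u\<close>, and \<open>|R\<^sub>u\<^sub>' R\<^sub>v| = 1\<close> forces \<open>(y\<^sub>0, z)\<close> and \<open>(y\<^sub>1, z)\<close> into the same
  relation. But an entry \<open>(y, z)\<close> of any element of \<open>\<T>\<^sub>0\<close> only depends on the relations
  containing \<open>(x, y)\<close>, \<open>(y, z)\<close> and \<open>(x, z)\<close>, so the product cannot lie in \<open>\<T>\<^sub>0\<close>,
  although a unital algebra containing the factors contains it.\<close>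

lemma is_schemeD:
  assumes "is_scheme d R"
  shows "\<forall>i\<le>d. R i \<noteq> {}"
    and "\<forall>i\<le>d. \<forall>j\<le>d. i \<noteq> j \<longrightarrow> R i \<inter> R j = {}"
    and "(\<Union>i\<in>{..d}. R i) = UNIV"
    and "R 0 = {(b, b) | b. True}"
    and "\<forall>c\<le>d. \<exists>c'\<le>d. R c' = {(f, e). (e, f) \<in> R c}"
    and "\<forall>i\<le>d. \<forall>j\<le>d. \<forall>k\<le>d. \<exists>N. \<forall>(m, n)\<in>R k.
           card {l. (m, l) \<in> R i \<and> (l, n) \<in> R j} = N"
  using assms unfolding is_scheme_def by simp_all

lemma scheme_relations_disjoint:
  assumes "is_scheme d R" "i \<le> d" "k \<le> d" "p \<in> R i" "p \<in> R k"
  shows "i = k"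
  using is_schemeD(2)[OF assms(1)] assms(2-5) by blast

lemma scheme_relation_exists:
  assumes "is_scheme d R"
  obtains i where "i \<le> d" "p \<in> R i"
  using is_schemeD(3)[OF assms] by blast

lemma scheme_relation_nonempty:
  assumes "is_scheme d R" "i \<le> d"
  shows "R i \<noteq> {}"
  using is_schemeD(1)[OF assms(1)] assms(2) by blast

lemma inum_eq_card:
  assumes "is_scheme d R" "i \<le> d" "j \<le> d" "k \<le> d" "(m, n) \<in> R k"
  shows "inum R i j k = card {l. (m, l) \<in> R i \<and> (l, n) \<in> R j}"
proof -
  obtain N where N: "\<forall>(m, n)\<in>R k. card {l. (m, l) \<in> R i \<and> (l, n) \<in> R j} = N"
    using is_schemeD(6)[OF assms(1)] assms(2-4) by blast
  obtain m' n' where mn: "(SOME mn. mn \<in> R k) = (m', n')" by fastforce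
  have "(m', n') \<in> R k"
    using someI[of "\<lambda>mn. mn \<in> R k", OF assms(5)] unfolding mn .
  have "inum R i j k = card {l. (m', l) \<in> R i \<and> (l, n') \<in> R j}"
    unfolding inum_def mn by simp
  also have "\<dots> = N" using N \<open>(m', n') \<in> R k\<close> by auto
  also have "\<dots> = card {l. (m, l) \<in> R i \<and> (l, n) \<in> R j}" using N assms(5) by auto
  finally show ?thesis .
qed

lemma cidx_converse:
  assumes "is_scheme d R" "c \<le> d"
  shows "cidx d R c \<le> d" "R (cidx d R c) = {(f, e). (e, f) \<in> R c}"
proof -
  obtain c' where c': "c' \<le> d" "R c' = {(f, e). (e, f) \<in> R c}"
    using is_schemeD(5)[OF assms(1)] assms(2) by blast
  have unique: "c'' = c'" if "c'' \<le> d \<and> R c'' = {(f, e). (e, f) \<in> R c}" for c''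
  proof -
    obtain p where "p \<in> R c'" using scheme_relation_nonempty[OF assms(1) c'(1)] by blast
    moreover have "R c'' = R c'" using that c'(2) by simp
    ultimately show ?thesis using scheme_relations_disjoint[OF assms(1) _ c'(1)] that by blast
  qed
  have "cidx d R c = c'"
    unfolding cidx_def using c' unique by (intro the_equality) blast+
  with c' show "cidx d R c \<le> d" "R (cidx d R c) = {(f, e). (e, f) \<in> R c}" by simp_all
qed

lemma valency_eq_card:
  assumes "is_scheme d R" "u \<le> d"
  shows "valency d R u = card {y. (x, y) \<in> R u}"
proof -
  have "(x, x) \<in> R 0" using is_schemeD(4)[OF assms(1)] by simp
  then have "valency d R u = card {y. (x, y) \<in> R u \<and> (y, x) \<in> R (cidx d R u)}"
    unfolding valency_def using inum_eq_card[OF assms(1,2) cidx_converse(1)[OF assms]] by simp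
  also have "{y. (x, y) \<in> R u \<and> (y, x) \<in> R (cidx d R u)} = {y. (x, y) \<in> R u}"
    using cidx_converse(2)[OF assms] by auto
  finally show ?thesis .
qed

lemma valency_two_neighbours:
  assumes "is_scheme d R" "u \<le> d" "valency d R u = 2"
  shows "\<exists>y. (x, y) \<in> R u"
    and "(x, y) \<in> R u \<Longrightarrow> \<exists>y'. (x, y') \<in> R u \<and> y' \<noteq> y"
proof -
  have card: "card {y. (x, y) \<in> R u} = 2"
    using valency_eq_card[OF assms(1,2)] assms(3) by simp
  then show "\<exists>y. (x, y) \<in> R u"
    by (metis (no_types, lifting) Collect_empty_eq card.empty zero_neq_numeral)
  assume "(x, y) \<in> R u"
  moreover have "{y'. (x, y') \<in> R u} \<noteq> {y}" using card by auto
  ultimately show "\<exists>y'. (x, y') \<in> R u \<and> y' \<noteq> y" by blast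
qed

lemma cprod_singleton_same_relation:
  assumes "is_scheme d R" "u \<le> d" "v \<le> d" "card (cprod d R (cidx d R u) v) = 1"
    and "(x, y\<^sub>0) \<in> R u" "(x, y\<^sub>1) \<in> R u" "(x, z) \<in> R v" "j \<le> d"
  shows "(y\<^sub>0, z) \<in> R j \<longleftrightarrow> (y\<^sub>1, z) \<in> R j"
proof -
  have in_cprod: "R c \<in> cprod d R (cidx d R u) v"
    if "c \<le> d" "(y, z) \<in> R c" "(x, y) \<in> R u" for c y
  proof -
    have "x \<in> {l. (y, l) \<in> R (cidx d R u) \<and> (l, z) \<in> R v}"
      using cidx_converse(2)[OF assms(1,2)] that(3) assms(7) by auto
    then have "card {l. (y, l) \<in> R (cidx d R u) \<and> (l, z) \<in> R v} > 0"
      by (auto simp: card_gt_0_iff)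
    then have "inum R (cidx d R u) v c > 0"
      using inum_eq_card[OF assms(1) cidx_converse(1)[OF assms(1,2)] assms(3) that(1,2)] by simp
    with that(1) show ?thesis unfolding cprod_def by auto
  qed
  obtain c\<^sub>0 where c\<^sub>0: "c\<^sub>0 \<le> d" "(y\<^sub>0, z) \<in> R c\<^sub>0" using scheme_relation_exists[OF assms(1)] .
  obtain c\<^sub>1 where c\<^sub>1: "c\<^sub>1 \<le> d" "(y\<^sub>1, z) \<in> R c\<^sub>1" using scheme_relation_exists[OF assms(1)] .
  have "R c\<^sub>0 = R c\<^sub>1"
    using in_cprod[OF c\<^sub>0 assms(5)] in_cprod[OF c\<^sub>1 assms(6)] assms(4)
    by (metis card_1_singletonE singletonD)
  then have "c\<^sub>0 = c\<^sub>1"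
    using scheme_relations_disjoint[OF assms(1) c\<^sub>0(1) c\<^sub>1(1)] c\<^sub>0(2) c\<^sub>1(2) by blast
  then show ?thesis
    using scheme_relations_disjoint[OF assms(1) assms(8)] c\<^sub>0 c\<^sub>1 by blast
qed

abbreviation EAE :: "(nat \<Rightarrow> ('x::finite \<times> 'x) set) \<Rightarrow> 'x \<Rightarrow> nat \<Rightarrow> nat \<Rightarrow> nat \<Rightarrow> ('x, 'a::field) xmat"
  where "EAE R x i j l \<equiv> mmult (mmult (dualidem R x i) (adjm R j)) (dualidem R x l)"

lemma mmult_unit_column:
  assumes "\<And>w. N w z = (if w = w\<^sub>0 then 1 else 0)"
  shows "mmult M N y z = M y w\<^sub>0"
  unfolding mmult_def assms by (simp flip: of_bool_def)

lemma mmult_mone_left [simp]: "mmult mone M = M"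
  unfolding mmult_def mone_def by (simp flip: of_bool_def)

lemma mmult_dualidem_left:
  "mmult (dualidem R x i) M y z = (if (x, y) \<in> R i then M y z else 0)"
proof -
  have "dualidem R x i y w * M w z = (if w = y then if (x, y) \<in> R i then M y z else 0 else 0)" for w
    by (auto simp: dualidem_def)
  then show ?thesis unfolding mmult_def by (simp only: sum.delta finite UNIV_I if_True)
qed

lemma mmult_dualidem_right:
  "mmult M (dualidem R x l) y z = (if (x, z) \<in> R l then M y z else 0)"
proof -
  have "M y w * dualidem R x l w z = (if w = z then if (x, z) \<in> R l then M y z else 0 else 0)" for w
    by (simp add: dualidem_def)
  then show ?thesis unfolding mmult_def by (simp only: sum.delta finite UNIV_I if_True)
qed

lemma EAE_entry:
  "EAE R x i j l y z =
    (if (x, y) \<in> R i \<and> (y, z) \<in> R j \<and> (x, z) \<in> R l then 1 else 0)"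
  by (simp add: mmult_dualidem_left mmult_dualidem_right adjm_def)

lemma EAE_in_T0:
  assumes "i \<le> d" "j \<le> d" "l \<le> d"
  shows "EAE R x i j l \<in> T0 d R x"
proof -
  let ?c = "\<lambda>i' j' l'. if i' = i \<and> j' = j \<and> l' = l then 1 else 0"
  \<comment> \<open>the test on the innermost index comes first, so \<open>sum.delta\<close> collapses the sums from inside out\<close>
  have summand: "?c i' j' l' * EAE R x i' j' l' y z =
      (if l' = l then if j' = j then if i' = i then EAE R x i j l y z else 0 else 0 else 0)"
    for i' j' l' y z
    by simp
  have "EAE R x i j l = (\<lambda>y z. \<Sum>i'\<le>d. \<Sum>j'\<le>d. \<Sum>l'\<le>d. ?c i' j' l' * EAE R x i' j' l' y z)"
    by (simp only: summand sum.delta finite_atMost atMost_iff assms if_True)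
  then show ?thesis unfolding T0_def mem_Collect_eq by (rule exI[of _ ?c])
qed

lemma T0_entry_eq:
  assumes "M \<in> T0 d R x"
    and "\<And>i. i \<le> d \<Longrightarrow> (x, y) \<in> R i \<longleftrightarrow> (x, y') \<in> R i"
    and "\<And>j. j \<le> d \<Longrightarrow> (y, z) \<in> R j \<longleftrightarrow> (y', z) \<in> R j"
  shows "M y z = M y' z"
proof -
  obtain c where c: "M = (\<lambda>y z. \<Sum>i\<le>d. \<Sum>j\<le>d. \<Sum>l\<le>d. c i j l * EAE R x i j l y z)"
    using assms(1) unfolding T0_def by blast
  show ?thesis
    unfolding c EAE_entry by (intro sum.cong refl) (simp add: assms(2,3))
qed

lemma T0_entry_eq_cprod_singleton:
  assumes "is_scheme d R" "u \<le> d" "v \<le> d" "card (cprod d R (cidx d R u) v) = 1"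
    and "M \<in> T0 d R x" "(x, y\<^sub>0) \<in> R u" "(x, y\<^sub>1) \<in> R u" "(x, z) \<in> R v"
  shows "M y\<^sub>0 z = M y\<^sub>1 z"
proof (rule T0_entry_eq[OF assms(5)])
  show "(x, y\<^sub>0) \<in> R i \<longleftrightarrow> (x, y\<^sub>1) \<in> R i" if "i \<le> d" for i
    using scheme_relations_disjoint[OF assms(1) that assms(2)] assms(6,7) by blast
  show "(y\<^sub>0, z) \<in> R j \<longleftrightarrow> (y\<^sub>1, z) \<in> R j" if "j \<le> d" for j
    using cprod_singleton_same_relation[OF assms(1-4,6-8) that] .
qed

lemma unital_subalgebra_foldl_mmult:
  assumes "unital_subalgebra T" "set Ms \<subseteq> T"
  shows "foldl mmult mone Ms \<in> T"
proof -
  have "foldl mmult M Ms \<in> T" if "M \<in> T" for M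
    using assms(2) that
  proof (induction Ms arbitrary: M)
    case (Cons N Ms)
    then show ?case using assms(1) unfolding unital_subalgebra_def by simp
  qed simp
  then show ?thesis using assms(1) unfolding unital_subalgebra_def by blast
qed

lemma EAE_column_unit:
  assumes "is_scheme d R" "i \<le> d" "j \<le> d" "l \<le> d" "inum R i j l = 1" "(x, z) \<in> R l"
  obtains w where "(x, w) \<in> R i" "\<And>y. EAE R x i j l y z = (if y = w then 1 else 0)"
proof -
  have "card {w. (x, w) \<in> R i \<and> (w, z) \<in> R j} = 1"
    using inum_eq_card[OF assms(1-4,6)] assms(5) by simp
  then obtain w where w: "{w. (x, w) \<in> R i \<and> (w, z) \<in> R j} = {w}"
    by (rule card_1_singletonE)
  show ?thesis
  proof (rule that)
    show "(x, w) \<in> R i" using w by auto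
    show "EAE R x i j l y z = (if y = w then 1 else 0)" for y
      unfolding EAE_entry using w assms(6) by auto
  qed
qed

lemma chain_product_column_unit:
  assumes "is_scheme d R"
    and "\<forall>b\<le>n. ii b \<le> d \<and> jj b \<le> d \<and> ll b \<le> d \<and> inum R (ii b) (jj b) (ll b) = 1"
    and "\<forall>b<n. ll b = ii (Suc b)"
    and "(x, z) \<in> R (ll n)"
  shows "\<exists>y\<^sub>0. (x, y\<^sub>0) \<in> R (ii 0) \<and>
    (\<forall>y. foldl mmult mone (map (\<lambda>b. EAE R x (ii b) (jj b) (ll b)) [0..<Suc n]) y z
       = (if y = y\<^sub>0 then (1::'a::field) else 0))"
  using assms(2-4)
proof (induction n arbitrary: z)
  case 0
  then have hyps: "ii 0 \<le> d" "jj 0 \<le> d" "ll 0 \<le> d" "inum R (ii 0) (jj 0) (ll 0) = 1" by auto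
  obtain w where "(x, w) \<in> R (ii 0)"
    "\<And>y. EAE R x (ii 0) (jj 0) (ll 0) y z = (if y = w then (1::'a) else 0)"
    using EAE_column_unit[OF assms(1) hyps \<open>(x, z) \<in> R (ll 0)\<close>] by blast
  then show ?case by auto
next
  case (Suc n)
  from Suc.prems(1)
  have hyps: "ii (Suc n) \<le> d" "jj (Suc n) \<le> d" "ll (Suc n) \<le> d"
    "inum R (ii (Suc n)) (jj (Suc n)) (ll (Suc n)) = 1" by auto
  obtain w where w: "(x, w) \<in> R (ii (Suc n))"
    "\<And>y. EAE R x (ii (Suc n)) (jj (Suc n)) (ll (Suc n)) y z = (if y = w then (1::'a) else 0)"
    using EAE_column_unit[OF assms(1) hyps Suc.prems(3)] by blast
  have "\<forall>b\<le>n. ii b \<le> d \<and> jj b \<le> d \<and> ll b \<le> d \<and> inum R (ii b) (jj b) (ll b) = 1"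
    using Suc.prems(1) by simp
  moreover have "\<forall>b<n. ll b = ii (Suc b)" "(x, w) \<in> R (ll n)"
    using Suc.prems(2) w(1) by simp_all
  ultimately
  obtain y\<^sub>0 where "(x, y\<^sub>0) \<in> R (ii 0)"
    "\<forall>y. foldl mmult mone (map (\<lambda>b. EAE R x (ii b) (jj b) (ll b)) [0..<Suc n]) y w
       = (if y = y\<^sub>0 then (1::'a) else 0)"
    using Suc.IH by blast
  then show ?case
    by (auto simp: mmult_unit_column[where N = "EAE R x (ii (Suc n)) (jj (Suc n)) (ll (Suc n))", OF w(2)])
qed

theorem lemma4p8:
  fixes R :: "nat \<Rightarrow> ('x::finite \<times> 'x) set" and d :: nat and x :: 'x
  assumes "is_scheme d R"
    and "unital_subalgebra (T0 d R x :: ('x, 'a::field) xmat set)"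
  shows "\<not> (\<exists>u v. bad_pair d R u v)"
proof
  assume "\<exists>u v. bad_pair d R u v"
  then obtain u v a ii jj ll where bnd: "\<forall>b\<le>a. ii b \<le> d \<and> jj b \<le> d \<and> ll b \<le> d"
    and ends: "ii 0 = u" "ll a = v"
    and val: "\<forall>b\<le>a. valency d R (ii b) = 2 \<and> valency d R (ll b) = 2 \<and>
      inum R (ii b) (jj b) (ll b) = 1"
    and chain: "\<forall>c<a. ll c = ii (Suc c)" and cp: "card (cprod d R (cidx d R u) v) = 1"
    unfolding bad_pair_def by (elim exE conjE) (rule that; assumption)
  have "u \<le> d" "v \<le> d" "valency d R u = 2" "valency d R v = 2" using bnd val ends by auto
  define P :: "('x, 'a) xmat" where
    "P = foldl mmult mone (map (\<lambda>b. EAE R x (ii b) (jj b) (ll b)) [0..<Suc a])"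
  have "P \<in> T0 d R x"
    unfolding P_def using bnd
    by (intro unital_subalgebra_foldl_mmult[OF assms(2)]) (auto intro!: EAE_in_T0)
  obtain z where z: "(x, z) \<in> R v"
    using valency_two_neighbours(1)[OF assms(1) \<open>v \<le> d\<close> \<open>valency d R v = 2\<close>] by blast
  have "\<forall>b\<le>a. ii b \<le> d \<and> jj b \<le> d \<and> ll b \<le> d \<and> inum R (ii b) (jj b) (ll b) = 1"
    using bnd val by blast
  from chain_product_column_unit[OF assms(1) this chain, of x z] z ends
  obtain y\<^sub>0 where y\<^sub>0: "(x, y\<^sub>0) \<in> R u" "\<And>y. P y z = (if y = y\<^sub>0 then 1 else 0)"
    unfolding P_def by blast
  obtain y\<^sub>1 where y\<^sub>1: "(x, y\<^sub>1) \<in> R u" "y\<^sub>1 \<noteq> y\<^sub>0"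
    using valency_two_neighbours(2)[OF assms(1) \<open>u \<le> d\<close> \<open>valency d R u = 2\<close> y\<^sub>0(1)] by blast
  have "P y\<^sub>0 z = P y\<^sub>1 z"
    using T0_entry_eq_cprod_singleton[OF assms(1) \<open>u \<le> d\<close> \<open>v \<le> d\<close> cp \<open>P \<in> T0 d R x\<close> y\<^sub>0(1) y\<^sub>1(1) z] .
  with y\<^sub>0(2) y\<^sub>1(2) show False by simp
qed

end
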